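(* Let $G$ be a finite abelian group, $\Phi$ a normalized $3$-cocycle on $G$, and $V=\bigoplus_{i=1}^nV_i$ an object of ${}^{\mathbbm{k}G}_{\mathbbm{k}G}\mathcal{YD}^{\Phi}$ with each $V_i$ simple. Let $H=G_V$. If $\Phi|_H$ is not an abelian $3$-cocycle on $H$, then $n\ge3$ and at least three of the summands $V_i$ are not of diagonal type.
   Context: $\mathbbm{k}$ is algebraically closed of characteristic zero. For a finite abelian group $K$, a normalized 3-cocycle $\Phi$ and $g\in K$, $\widetilde{\Phi}_g(x,y)=\frac{\Phi(g,x,y)\Phi(x,y,g)}{\Phi(x,g,y)}$. The category ${}^{\mathbbm{k}K}_{\mathbbm{k}K}\mathcal{YD}^{\Phi}$ has objects the $K$-graded spaces $V=\bigoplus_gV_g$ with operators $e\triangleright-$ preserving each $V_g$, $1\triangleright v=v$, $e\triangleright(f\triangleright v)=\widetilde{\Phi}_g(e,f)(ef)\triangleright v$ for $v\in V_g$ (with tensor product of degree $gh$ and action $e\triangleright(X\otimes Y)=\widetilde{\Phi}_e(g,h)(e\triangleright X)\otimes(e\triangleright Y)$). A simple object $V$ is concentrated in a single degree $g_V$; the support group $G_V$ of $V=\bigoplus_iV_i$ ($V_i$ simple) is the subgroup generated by the $g_{V_i}$. An object is of diagonal type if it is a direct sum of $1$-dimensional objects. A 3-cocycle $\Psi$ on $K$ is abelian if every simple object of ${}^{\mathbbm{k}K}_{\mathbbm{k}K}\mathcal{YD}^{\Psi}$ is $1$-dimensional. *)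

theory Defs
  imports "Jordan_Normal_Form.Determinant" "HOL-Algebra.Generated_Groups"
    "HOL-Computational_Algebra.Polynomial"
begin

text \<open>The ground field is algebraically closed (characteristic zero is imposed by the
  type class field_char_0 in the theorem).\<close>
definition alg_closed :: "'k::field itself \<Rightarrow> bool" where
  "alg_closed _ \<longleftrightarrow> (\<forall>p :: 'k poly. degree p \<ge> 1 \<longrightarrow> (\<exists>x. poly p x = 0))"

definition normalized_3cocycle :: "('g, 'z) monoid_scheme \<Rightarrow> ('g \<Rightarrow> 'g \<Rightarrow> 'g \<Rightarrow> 'k::field) \<Rightarrow> bool" where
  "normalized_3cocycle K \<Phi> \<longleftrightarrow>
     (\<forall>a\<in>carrier K. \<forall>b\<in>carrier K. \<forall>c\<in>carrier K. \<Phi> a b c \<noteq> 0) \<and>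
     (\<forall>a\<in>carrier K. \<forall>b\<in>carrier K. \<forall>c\<in>carrier K. \<forall>d\<in>carrier K.
        \<Phi> b c d * \<Phi> a (b \<otimes>\<^bsub>K\<^esub> c) d * \<Phi> a b c
          = \<Phi> (a \<otimes>\<^bsub>K\<^esub> b) c d * \<Phi> a b (c \<otimes>\<^bsub>K\<^esub> d)) \<and>
     (\<forall>a\<in>carrier K. \<forall>b\<in>carrier K.
        \<Phi> \<one>\<^bsub>K\<^esub> a b = 1 \<and> \<Phi> a \<one>\<^bsub>K\<^esub> b = 1 \<and> \<Phi> a b \<one>\<^bsub>K\<^esub> = 1)"

definition Phi_tilde :: "('g \<Rightarrow> 'g \<Rightarrow> 'g \<Rightarrow> 'k::field) \<Rightarrow> 'g \<Rightarrow> 'g \<Rightarrow> 'g \<Rightarrow> 'k" where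
  "Phi_tilde \<Phi> g x y = \<Phi> g x y * \<Phi> x y g / \<Phi> x g y"

text \<open>An object of YD^\<Phi> over kK concentrated in the single degree g, of (finite) dimension d,
  realised on k^d; rho e is the matrix of the operator e \<triangleright> -.\<close>
definition homog_obj :: "('g, 'z) monoid_scheme \<Rightarrow> ('g \<Rightarrow> 'g \<Rightarrow> 'g \<Rightarrow> 'k::field) \<Rightarrow> 'g \<Rightarrow> nat \<Rightarrow> ('g \<Rightarrow> 'k mat) \<Rightarrow> bool" where
  "homog_obj K \<Phi> g d \<rho> \<longleftrightarrow> g \<in> carrier K \<and>
     (\<forall>e\<in>carrier K. \<rho> e \<in> carrier_mat d d) \<and>
     \<rho> \<one>\<^bsub>K\<^esub> = 1\<^sub>m d \<and>
     (\<forall>e\<in>carrier K. \<forall>f\<in>carrier K. \<rho> e * \<rho> f = Phi_tilde \<Phi> g e f \<cdot>\<^sub>m \<rho> (e \<otimes>\<^bsub>K\<^esub> f))"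

definition invariant_subspace :: "('g, 'z) monoid_scheme \<Rightarrow> nat \<Rightarrow> ('g \<Rightarrow> 'k::field mat) \<Rightarrow> 'k vec set \<Rightarrow> bool" where
  "invariant_subspace K d \<rho> W \<longleftrightarrow> W \<subseteq> carrier_vec d \<and> 0\<^sub>v d \<in> W \<and>
     (\<forall>v\<in>W. \<forall>w\<in>W. v + w \<in> W) \<and> (\<forall>c. \<forall>v\<in>W. c \<cdot>\<^sub>v v \<in> W) \<and>
     (\<forall>e\<in>carrier K. \<forall>v\<in>W. \<rho> e *\<^sub>v v \<in> W)"

definition simple_obj :: "('g, 'z) monoid_scheme \<Rightarrow> ('g \<Rightarrow> 'g \<Rightarrow> 'g \<Rightarrow> 'k::field) \<Rightarrow> 'g \<Rightarrow> nat \<Rightarrow> ('g \<Rightarrow> 'k mat) \<Rightarrow> bool" where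
  "simple_obj K \<Phi> g d \<rho> \<longleftrightarrow> homog_obj K \<Phi> g d \<rho> \<and> d \<noteq> 0 \<and>
     (\<forall>W. invariant_subspace K d \<rho> W \<longrightarrow> W = {0\<^sub>v d} \<or> W = carrier_vec d)"

text \<open>Diagonal type: direct sum of 1-dimensional subobjects, i.e. there is a basis of k^d
  each of whose lines is stable under all operators.\<close>
definition diagonal_type :: "('g, 'z) monoid_scheme \<Rightarrow> nat \<Rightarrow> ('g \<Rightarrow> 'k::field mat) \<Rightarrow> bool" where
  "diagonal_type K d \<rho> \<longleftrightarrow> (\<exists>vs. length vs = d \<and> set vs \<subseteq> carrier_vec d \<and>
     det (mat_of_cols d vs) \<noteq> 0 \<and>
     (\<forall>v\<in>set vs. \<forall>e\<in>carrier K. \<exists>c. \<rho> e *\<^sub>v v = c \<cdot>\<^sub>v v))"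

text \<open>Abelian 3-cocycle: every simple object of YD^\<Psi> over kK is 1-dimensional
  (simple objects are concentrated in a single degree).\<close>
definition abelian_3cocycle :: "('g, 'z) monoid_scheme \<Rightarrow> ('g \<Rightarrow> 'g \<Rightarrow> 'g \<Rightarrow> 'k::field) \<Rightarrow> bool" where
  "abelian_3cocycle K \<Psi> \<longleftrightarrow>
     (\<forall>g d (\<rho> :: 'g \<Rightarrow> 'k mat). simple_obj K \<Psi> g d \<rho> \<longrightarrow> d = 1)"

end

theory Submission
  imports Defs "Jordan_Normal_Form.Char_Poly"
begin

text \<open>For a simple object of degree \<open>g\<close> the operators satisfy
  \<open>\<rho>(e) \<rho>(f) = \<Phi>~\<^sub>g(e, f) \<rho>(e f)\<close>, so they commute, and the object is one-dimensional by
  Schur's lemma, as soon as \<open>\<Phi>~\<^sub>g\<close> is symmetric, i.e. as soon as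
  \<open>\<beta>(g, x, y) = \<Phi>~\<^sub>g(x, y) / \<Phi>~\<^sub>g(y, x)\<close> equals 1.
  Since \<open>\<Phi>~\<^sub>g\<close> is a 2-cocycle on an abelian group, \<open>\<beta>\<close> is multiplicative in \<open>x\<close>; since \<open>\<beta>\<close>
  is the product of \<open>\<Phi>\<close> over the even permutations of \<open>(g, x, y)\<close> divided by the product
  over the odd ones, it is invariant under rotation. Hence \<open>\<beta>\<close> is an alternating
  trimultiplicative form.
  A summand of diagonal type has a common eigenvector, whose eigenvalues exhibit \<open>\<Phi>~\<^sub>g\<close> as a
  coboundary; so its degree lies in the radical of \<open>\<beta>\<close>. If at most two summands are not of
  diagonal type, then among any three generators of \<open>H\<close> one lies in the radical or two
  coincide, so \<open>\<beta>\<close> is trivial on \<open>H\<close> and \<open>\<Phi>|\<^sub>H\<close> is abelian.\<close>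

lemma normalized_3cocycle_nonzero:
  assumes "normalized_3cocycle K \<Phi>" "a \<in> carrier K" "b \<in> carrier K" "c \<in> carrier K"
  shows "\<Phi> a b c \<noteq> 0"
  using assms unfolding normalized_3cocycle_def by blast

lemma normalized_3cocycle_cocycle:
  assumes "normalized_3cocycle K \<Phi>"
    and "a \<in> carrier K" "b \<in> carrier K" "c \<in> carrier K" "d \<in> carrier K"
  shows "\<Phi> b c d * \<Phi> a (b \<otimes>\<^bsub>K\<^esub> c) d * \<Phi> a b c
    = \<Phi> (a \<otimes>\<^bsub>K\<^esub> b) c d * \<Phi> a b (c \<otimes>\<^bsub>K\<^esub> d)"
  using assms unfolding normalized_3cocycle_def by blast

lemma Phi_tilde_nonzero:
  assumes "normalized_3cocycle K \<Phi>" "g \<in> carrier K" "x \<in> carrier K" "y \<in> carrier K"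
  shows "Phi_tilde \<Phi> g x y \<noteq> 0"
  using assms normalized_3cocycle_nonzero[OF assms(1)] unfolding Phi_tilde_def by simp

lemma (in comm_group) Phi_tilde_2cocycle:
  assumes N: "normalized_3cocycle G \<Phi>"
    and g: "g \<in> carrier G" and x: "x \<in> carrier G" and y: "y \<in> carrier G" and z: "z \<in> carrier G"
  shows "Phi_tilde \<Phi> g x y * Phi_tilde \<Phi> g (x \<otimes> y) z
    = Phi_tilde \<Phi> g y z * Phi_tilde \<Phi> g x (y \<otimes> z)"
proof -
  note cocycle = normalized_3cocycle_cocycle[OF N] and nz = normalized_3cocycle_nonzero[OF N]
  have e1: "\<Phi> g (x \<otimes> y) z = \<Phi> g x (y \<otimes> z) * \<Phi> (g \<otimes> x) y z / (\<Phi> g x y * \<Phi> x y z)"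
    using cocycle[OF g x y z] nz g x y z by (simp add: field_simps m_ac)
  have e2: "\<Phi> x g (y \<otimes> z) = \<Phi> g y z * \<Phi> x g y * \<Phi> x (g \<otimes> y) z / \<Phi> (g \<otimes> x) y z"
    using cocycle[OF x g y z] nz g x y z by (simp add: field_simps m_ac)
  have e3: "\<Phi> (x \<otimes> y) g z = \<Phi> x y g * \<Phi> y g z * \<Phi> x (g \<otimes> y) z / \<Phi> x y (g \<otimes> z)"
    using cocycle[OF x y g z] nz g x y z by (simp add: field_simps m_ac)
  have e4: "\<Phi> (x \<otimes> y) z g = \<Phi> x y z * \<Phi> y z g * \<Phi> x (y \<otimes> z) g / \<Phi> x y (g \<otimes> z)"
    using cocycle[OF x y z g] nz g x y z by (simp add: field_simps m_ac)
  show ?thesis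
    unfolding Phi_tilde_def e1 e2 e3 e4 using nz g x y z by (simp add: field_simps)
qed

lemma (in comm_group) two_cocycle_skew_mult:
  fixes \<omega> :: "'a \<Rightarrow> 'a \<Rightarrow> 'k::field"
  assumes nonzero: "\<And>x y. x \<in> carrier G \<Longrightarrow> y \<in> carrier G \<Longrightarrow> \<omega> x y \<noteq> 0"
    and cocycle: "\<And>x y z. x \<in> carrier G \<Longrightarrow> y \<in> carrier G \<Longrightarrow> z \<in> carrier G \<Longrightarrow>
      \<omega> x y * \<omega> (x \<otimes> y) z = \<omega> y z * \<omega> x (y \<otimes> z)"
    and x: "x \<in> carrier G" and y: "y \<in> carrier G" and z: "z \<in> carrier G"
  shows "\<omega> (x \<otimes> y) z / \<omega> z (x \<otimes> y) = \<omega> x z / \<omega> z x * (\<omega> y z / \<omega> z y)"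
proof -
  have e1: "\<omega> (x \<otimes> y) z = \<omega> y z * \<omega> x (y \<otimes> z) / \<omega> x y"
    using cocycle[OF x y z] nonzero x y by (simp add: field_simps)
  have e2: "\<omega> x (y \<otimes> z) = \<omega> x z * \<omega> (x \<otimes> z) y / \<omega> z y"
    using cocycle[OF x z y] nonzero y z unfolding m_comm[OF z y] by (simp add: field_simps)
  have e3: "\<omega> z (x \<otimes> y) = \<omega> z x * \<omega> (x \<otimes> z) y / \<omega> x y"
    using cocycle[OF z x y] nonzero x y unfolding m_comm[OF z x] by (simp add: field_simps)
  show ?thesis
    unfolding e1 e2 e3 using nonzero x y z by (simp add: field_simps)
qed

definition Phi_skew :: "('g \<Rightarrow> 'g \<Rightarrow> 'g \<Rightarrow> 'k::field) \<Rightarrow> 'g \<Rightarrow> 'g \<Rightarrow> 'g \<Rightarrow> 'k" where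
  "Phi_skew \<Phi> g x y = Phi_tilde \<Phi> g x y / Phi_tilde \<Phi> g y x"

lemma Phi_skew_rotate:
  assumes "normalized_3cocycle K \<Phi>" "g \<in> carrier K" "x \<in> carrier K" "y \<in> carrier K"
  shows "Phi_skew \<Phi> g x y = Phi_skew \<Phi> x y g"
  using assms normalized_3cocycle_nonzero[OF assms(1)]
  unfolding Phi_skew_def Phi_tilde_def by (simp add: field_simps)

lemma Phi_skew_same_first:
  assumes "normalized_3cocycle K \<Phi>" "g \<in> carrier K" "x \<in> carrier K"
  shows "Phi_skew \<Phi> g g x = 1"
  using assms normalized_3cocycle_nonzero[OF assms(1)]
  unfolding Phi_skew_def Phi_tilde_def by simp

lemma Phi_skew_same_last:
  assumes "normalized_3cocycle K \<Phi>" "g \<in> carrier K" "x \<in> carrier K"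
  shows "Phi_skew \<Phi> g x x = 1"
  using Phi_tilde_nonzero[OF assms(1,2,3,3)] unfolding Phi_skew_def by simp

lemma (in comm_group) Phi_skew_mult:
  assumes N: "normalized_3cocycle G \<Phi>"
    and "g \<in> carrier G" "x \<in> carrier G" "y \<in> carrier G" "z \<in> carrier G"
  shows "Phi_skew \<Phi> g (x \<otimes> y) z = Phi_skew \<Phi> g x z * Phi_skew \<Phi> g y z"
  unfolding Phi_skew_def
  using two_cocycle_skew_mult[of "Phi_tilde \<Phi> g"] Phi_tilde_nonzero[OF N] Phi_tilde_2cocycle[OF N]
    assms by simp

definition alternating_trimultiplicative ::
    "('g, 'z) monoid_scheme \<Rightarrow> ('g \<Rightarrow> 'g \<Rightarrow> 'g \<Rightarrow> 'k::field) \<Rightarrow> bool" where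
  "alternating_trimultiplicative K t \<longleftrightarrow>
     (\<forall>x\<in>carrier K. \<forall>y\<in>carrier K. \<forall>z\<in>carrier K. \<forall>w\<in>carrier K.
        t (x \<otimes>\<^bsub>K\<^esub> w) y z = t x y z * t w y z \<and>
        t x (y \<otimes>\<^bsub>K\<^esub> w) z = t x y z * t x w z \<and>
        t x y (z \<otimes>\<^bsub>K\<^esub> w) = t x y z * t x y w) \<and>
     (\<forall>x\<in>carrier K. \<forall>y\<in>carrier K. t x x y = 1 \<and> t x y x = 1 \<and> t y x x = 1)"

lemma alternating_trimultiplicative_mult:
  assumes "alternating_trimultiplicative K t"
    and "x \<in> carrier K" "y \<in> carrier K" "z \<in> carrier K" "w \<in> carrier K"
  shows "t (x \<otimes>\<^bsub>K\<^esub> w) y z = t x y z * t w y z"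
    and "t x (y \<otimes>\<^bsub>K\<^esub> w) z = t x y z * t x w z"
    and "t x y (z \<otimes>\<^bsub>K\<^esub> w) = t x y z * t x y w"
  using assms unfolding alternating_trimultiplicative_def by simp_all

lemma alternating_trimultiplicative_same:
  assumes "alternating_trimultiplicative K t" and "x \<in> carrier K" "y \<in> carrier K"
  shows "t x x y = 1" and "t x y x = 1" and "t y x x = 1"
  using assms unfolding alternating_trimultiplicative_def by simp_all

lemma (in comm_group) Phi_skew_alternating_trimultiplicative:
  assumes N: "normalized_3cocycle G \<Phi>"
  shows "alternating_trimultiplicative G (Phi_skew \<Phi>)"
proof -
  note rotate = Phi_skew_rotate[OF N] and mult = Phi_skew_mult[OF N]
  have mult1: "Phi_skew \<Phi> (x \<otimes> w) y z = Phi_skew \<Phi> x y z * Phi_skew \<Phi> w y z"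
    if "x \<in> carrier G" "w \<in> carrier G" "y \<in> carrier G" "z \<in> carrier G" for x w y z
    using rotate[of "x \<otimes> w" y z] rotate[of y z "x \<otimes> w"] mult[of z x w y]
      rotate[of x y z] rotate[of y z x] rotate[of w y z] rotate[of y z w] that by simp
  have mult3: "Phi_skew \<Phi> x y (z \<otimes> w) = Phi_skew \<Phi> x y z * Phi_skew \<Phi> x y w"
    if "x \<in> carrier G" "y \<in> carrier G" "z \<in> carrier G" "w \<in> carrier G" for x y z w
    using rotate[of x y "z \<otimes> w"] mult[of y z w x] rotate[of x y z] rotate[of x y w] that by simp
  have same_outer: "Phi_skew \<Phi> x y x = 1" if "x \<in> carrier G" "y \<in> carrier G" for x y
    using rotate[of x y x] Phi_skew_same_last[OF N, of y x] that by simp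
  show ?thesis
    unfolding alternating_trimultiplicative_def
    using mult1 mult mult3 same_outer Phi_skew_same_first[OF N] Phi_skew_same_last[OF N] by simp
qed

context group
begin

lemma multiplicative_eq_one_on_generate:
  fixes f :: "'a \<Rightarrow> 'k::field"
  assumes S: "S \<subseteq> carrier G" and one: "f \<one> = 1"
    and mult: "\<And>u v. u \<in> carrier G \<Longrightarrow> v \<in> carrier G \<Longrightarrow> f (u \<otimes> v) = f u * f v"
    and gens: "\<And>s. s \<in> S \<Longrightarrow> f s = 1" and x: "x \<in> generate G S"
  shows "f x = 1"
  using x
proof (induction rule: generate.induct)
  case one
  then show ?case by (rule \<open>f \<one> = 1\<close>)
next
  case (incl h)
  then show ?case by (rule gens)
next
  case (inv h)
  then have h: "h \<in> carrier G" using S by auto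
  have "1 = f (h \<otimes> inv h)" using h one by simp
  also have "\<dots> = f (inv h)" using mult[OF h inv_closed[OF h]] gens[OF inv.hyps] by simp
  finally show ?case by simp
next
  case (eng h1 h2)
  then show ?case using mult generate_in_carrier[OF S] by simp
qed

lemma alternating_trimultiplicative_swap12:
  assumes t: "alternating_trimultiplicative G t"
    and x: "x \<in> carrier G" and y: "y \<in> carrier G" and z: "z \<in> carrier G"
  shows "t x y z * t y x z = 1"
proof -
  note mult = alternating_trimultiplicative_mult[OF t] and same = alternating_trimultiplicative_same[OF t]
  have "1 = t (x \<otimes> y) (x \<otimes> y) z" using same(1) x y z by simp
  also have "\<dots> = t x (x \<otimes> y) z * t y (x \<otimes> y) z" using mult(1) x y z by simp
  also have "\<dots> = t x x z * t x y z * (t y x z * t y y z)" using mult(2) x y z by simp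
  also have "\<dots> = t x y z * t y x z" using same(1) x y z by simp
  finally show ?thesis by simp
qed

lemma alternating_trimultiplicative_swap23:
  assumes t: "alternating_trimultiplicative G t"
    and x: "x \<in> carrier G" and y: "y \<in> carrier G" and z: "z \<in> carrier G"
  shows "t x y z * t x z y = 1"
proof -
  note mult = alternating_trimultiplicative_mult[OF t] and same = alternating_trimultiplicative_same[OF t]
  have "1 = t x (y \<otimes> z) (y \<otimes> z)" using same(3) x y z by simp
  also have "\<dots> = t x y (y \<otimes> z) * t x z (y \<otimes> z)" using mult(2) x y z by simp
  also have "\<dots> = t x y y * t x y z * (t x z y * t x z z)" using mult(3) x y z by simp
  also have "\<dots> = t x y z * t x z y" using same(3) x y z by simp
  finally show ?thesis by simp
qed

lemma alternating_trimultiplicative_one: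
  assumes t: "alternating_trimultiplicative G t" and y: "y \<in> carrier G" and z: "z \<in> carrier G"
  shows "t \<one> y z = 1" and "t y \<one> z = 1" and "t y z \<one> = 1"
proof -
  note mult = alternating_trimultiplicative_mult[OF t]
  have "t \<one> y z \<noteq> 0" "t y \<one> z \<noteq> 0" "t y z \<one> \<noteq> 0"
    using alternating_trimultiplicative_swap12[OF t, of \<one> y z]
      alternating_trimultiplicative_swap23[OF t, of y z \<one>] y z by auto
  moreover have "t \<one> y z = t \<one> y z * t \<one> y z" "t y \<one> z = t y \<one> z * t y \<one> z"
    "t y z \<one> = t y z \<one> * t y z \<one>"
    using mult(1)[of \<one> y z \<one>] mult(2)[of y \<one> z \<one>] mult(3)[of y z \<one> \<one>] y z by simp_all
  ultimately show "t \<one> y z = 1" "t y \<one> z = 1" "t y z \<one> = 1" by simp_all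
qed

lemma alternating_trimultiplicative_trivial_on_generate:
  assumes t: "alternating_trimultiplicative G t" and S: "S \<subseteq> carrier G"
    and gens: "\<And>r s u. r \<in> S \<Longrightarrow> s \<in> S \<Longrightarrow> u \<in> S \<Longrightarrow> t r s u = 1"
    and x: "x \<in> generate G S" and y: "y \<in> generate G S" and z: "z \<in> generate G S"
  shows "t x y z = 1"
proof -
  note mult = alternating_trimultiplicative_mult[OF t] and one = alternating_trimultiplicative_one[OF t]
  have gen_carrier: "\<And>u. u \<in> generate G S \<Longrightarrow> u \<in> carrier G"
    using generate_in_carrier[OF S] by blast
  have last: "t r s z = 1" if "r \<in> S" "s \<in> S" for r s
    by (rule multiplicative_eq_one_on_generate[OF S _ _ _ z])
      (use that subsetD[OF S] one mult(3) gens in auto)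
  have middle: "t r y z = 1" if "r \<in> S" for r
    by (rule multiplicative_eq_one_on_generate[OF S _ _ _ y, where f = "\<lambda>y. t r y z"])
      (use that subsetD[OF S] z gen_carrier one mult(2) last in auto)
  show ?thesis
    by (rule multiplicative_eq_one_on_generate[OF S _ _ _ x, where f = "\<lambda>x. t x y z"])
      (use subsetD[OF S] y z gen_carrier one mult(1) middle in auto)
qed

lemma alternating_trimultiplicative_trivial_on_generators:
  assumes t: "alternating_trimultiplicative G t" and S: "S \<subseteq> carrier G"
    and B: "finite B" "card B \<le> 2"
    and radical: "\<And>s y z. s \<in> S - B \<Longrightarrow> y \<in> carrier G \<Longrightarrow> z \<in> carrier G \<Longrightarrow> t s y z = 1"
    and r: "r \<in> S" and s: "s \<in> S" and u: "u \<in> S"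
  shows "t r s u = 1"
proof -
  have carrier: "r \<in> carrier G" "s \<in> carrier G" "u \<in> carrier G" using r s u S by auto
  note swap12 = alternating_trimultiplicative_swap12[OF t]
    and swap23 = alternating_trimultiplicative_swap23[OF t]
    and same = alternating_trimultiplicative_same[OF t]
  consider "r \<notin> B" | "s \<notin> B" | "u \<notin> B" | "r = s \<or> r = u \<or> s = u"
  proof (rule ccontr)
    assume "\<not> thesis"
    with that have "r \<in> B" "s \<in> B" "u \<in> B" "r \<noteq> s" "r \<noteq> u" "s \<noteq> u" by blast+
    then have "3 \<le> card B" using card_mono[OF B(1), of "{r, s, u}"] by simp
    with B(2) show False by simp
  qed
  then show ?thesis
  proof cases
    case 1
    then show ?thesis using radical r carrier by blast
  next
    case 2
    then show ?thesis using radical[of s r u] swap12[of r s u] s carrier by simp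
  next
    case 3
    then show ?thesis
      using radical[of u r s] swap12[of r u s] swap23[of r s u] u carrier by simp
  next
    case 4
    then show ?thesis using same carrier by blast
  qed
qed

end

lemma smult_vec_right_cancel:
  fixes v :: "'k::field vec"
  assumes v: "v \<in> carrier_vec n" "v \<noteq> 0\<^sub>v n" and eq: "a \<cdot>\<^sub>v v = b \<cdot>\<^sub>v v"
  shows "a = b"
proof -
  obtain j where j: "j < n" "v $ j \<noteq> 0"
    using v eq_vecI[of v "0\<^sub>v n"] by fastforce
  have "a * v $ j = b * v $ j" using arg_cong[OF eq, of "\<lambda>w. w $ j"] j v by simp
  then show ?thesis using j(2) by simp
qed

lemma smult_mat_mult_vec:
  fixes A :: "'k::field mat"
  assumes "A \<in> carrier_mat n n" "v \<in> carrier_vec n"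
  shows "(c \<cdot>\<^sub>m A) *\<^sub>v v = c \<cdot>\<^sub>v (A *\<^sub>v v)"
  using assms by (intro eq_vecI) (auto simp: scalar_prod_smult_left)

lemma alg_closed_eigenvector:
  fixes A :: "'k::field mat"
  assumes "alg_closed TYPE('k)" and A: "A \<in> carrier_mat d d" and "d \<noteq> 0"
  obtains k v where "v \<in> carrier_vec d" "v \<noteq> 0\<^sub>v d" "A *\<^sub>v v = k \<cdot>\<^sub>v v"
proof -
  have "degree (char_poly A) = d" using degree_monic_char_poly[OF A] by simp
  then obtain k where "poly (char_poly A) k = 0" using assms unfolding alg_closed_def by force
  then have "eigenvalue A k" using eigenvalue_root_char_poly[OF A] by simp
  then show ?thesis using that A unfolding eigenvalue_def eigenvector_def by blast
qed

lemma mat_of_cols_det_nonzero_col: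
  fixes vs :: "'k::field vec list"
  assumes "length vs = d" "set vs \<subseteq> carrier_vec d" "det (mat_of_cols d vs) \<noteq> 0" "j < d"
  shows "vs ! j \<noteq> 0\<^sub>v d"
proof
  assume "vs ! j = 0\<^sub>v d"
  then have "mat_of_cols d vs *\<^sub>v unit_vec d j = 0\<^sub>v d"
    using assms by (intro eq_vecI) (auto simp: mat_of_cols_def)
  then have "det (mat_of_cols d vs) = 0"
    using det_0_iff_vec_prod_zero_field[of "mat_of_cols d vs" d] assms
    by (metis mat_of_cols_carrier(1) unit_vec_carrier unit_vec_nonzero)
  with assms(3) show False by simp
qed

lemma simple_obj_invariant_eq_carrier:
  assumes "simple_obj K \<Phi> g d \<rho>" "invariant_subspace K d \<rho> W" "w \<in> W" "w \<noteq> 0\<^sub>v d"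
  shows "W = carrier_vec d"
  using assms unfolding simple_obj_def by blast

lemma invariant_subspace_eigenspace:
  fixes A :: "'k::field mat"
  assumes A: "A \<in> carrier_mat d d" and car: "\<And>e. e \<in> carrier K \<Longrightarrow> \<rho> e \<in> carrier_mat d d"
    and comm: "\<And>e. e \<in> carrier K \<Longrightarrow> A * \<rho> e = \<rho> e * A"
  shows "invariant_subspace K d \<rho> {w \<in> carrier_vec d. A *\<^sub>v w = k \<cdot>\<^sub>v w}"
  unfolding invariant_subspace_def
proof (intro conjI ballI allI)
  fix e v assume e: "e \<in> carrier K" and "v \<in> {w \<in> carrier_vec d. A *\<^sub>v w = k \<cdot>\<^sub>v w}"
  then have v: "v \<in> carrier_vec d" "A *\<^sub>v v = k \<cdot>\<^sub>v v" by auto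
  have "A *\<^sub>v (\<rho> e *\<^sub>v v) = (\<rho> e * A) *\<^sub>v v"
    using A car[OF e] v by (simp add: comm[OF e, symmetric] assoc_mult_mat_vec)
  also have "\<dots> = k \<cdot>\<^sub>v (\<rho> e *\<^sub>v v)" using A car[OF e] v by (simp add: mult_mat_vec)
  finally show "\<rho> e *\<^sub>v v \<in> {w \<in> carrier_vec d. A *\<^sub>v w = k \<cdot>\<^sub>v w}" using car[OF e] v by simp
qed (use A in \<open>auto simp: mult_add_distrib_mat_vec smult_add_distrib_vec mult_mat_vec
       smult_smult_assoc mult.commute\<close>)

lemma invariant_subspace_eigenline:
  fixes u :: "'k::field vec"
  assumes u: "u \<in> carrier_vec d" and car: "\<And>e. e \<in> carrier K \<Longrightarrow> \<rho> e \<in> carrier_mat d d"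
    and eigen: "\<And>e. e \<in> carrier K \<Longrightarrow> \<exists>c. \<rho> e *\<^sub>v u = c \<cdot>\<^sub>v u"
  shows "invariant_subspace K d \<rho> {c \<cdot>\<^sub>v u | c. True}"
  unfolding invariant_subspace_def
proof (intro conjI ballI allI)
  fix e v assume e: "e \<in> carrier K" and "v \<in> {c \<cdot>\<^sub>v u | c. True}"
  then obtain a where a: "v = a \<cdot>\<^sub>v u" by auto
  obtain c where c: "\<rho> e *\<^sub>v u = c \<cdot>\<^sub>v u" using eigen[OF e] by blast
  have "\<rho> e *\<^sub>v v = (a * c) \<cdot>\<^sub>v u" using a c u car[OF e] by (simp add: mult_mat_vec smult_smult_assoc)
  then show "\<rho> e *\<^sub>v v \<in> {c \<cdot>\<^sub>v u | c. True}" by auto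
next
  show "0\<^sub>v d \<in> {c \<cdot>\<^sub>v u | c. True}" using u by (auto intro!: exI[of _ 0])
qed (use u in \<open>auto simp: add_smult_distrib_vec[symmetric] smult_smult_assoc\<close>)

lemma simple_obj_commuting_dim_one:
  fixes \<rho> :: "'g \<Rightarrow> 'k::field mat"
  assumes ac: "alg_closed TYPE('k)" and S: "simple_obj K \<Phi> g d \<rho>"
    and comm: "\<And>e f. e \<in> carrier K \<Longrightarrow> f \<in> carrier K \<Longrightarrow> \<rho> e * \<rho> f = \<rho> f * \<rho> e"
  shows "d = 1"
proof -
  have d: "d \<noteq> 0" and car: "\<And>e. e \<in> carrier K \<Longrightarrow> \<rho> e \<in> carrier_mat d d"
    using S unfolding simple_obj_def homog_obj_def by auto
  have scalar: "\<exists>k. \<rho> e *\<^sub>v w = k \<cdot>\<^sub>v w" if e: "e \<in> carrier K" and w: "w \<in> carrier_vec d" for e w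
  proof -
    obtain k v where v: "v \<in> carrier_vec d" "v \<noteq> 0\<^sub>v d" "\<rho> e *\<^sub>v v = k \<cdot>\<^sub>v v"
      using alg_closed_eigenvector[OF ac car[OF e] d] by blast
    have "{w \<in> carrier_vec d. \<rho> e *\<^sub>v w = k \<cdot>\<^sub>v w} = carrier_vec d"
      using simple_obj_invariant_eq_carrier[OF S invariant_subspace_eigenspace] car e comm v by blast
    then show ?thesis using w by blast
  qed
  define u :: "'k vec" where "u = unit_vec d 0"
  have u: "u \<in> carrier_vec d" "u \<noteq> 0\<^sub>v d" using d unfolding u_def by auto
  have line: "invariant_subspace K d \<rho> {c \<cdot>\<^sub>v u | c. True}"
    by (rule invariant_subspace_eigenline[OF u(1) car scalar[OF _ u(1)]])
  have "u \<in> {c \<cdot>\<^sub>v u | c. True}" by (auto intro!: exI[of _ 1])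
  then have "{c \<cdot>\<^sub>v u | c. True} = carrier_vec d"
    using simple_obj_invariant_eq_carrier[OF S line _ u(2)] by blast
  then have "unit_vec d 1 \<in> {c \<cdot>\<^sub>v u | c. True}" by simp
  then obtain c where "unit_vec d 1 = c \<cdot>\<^sub>v u" by blast
  then have "(unit_vec d 1 :: 'k vec) $ 1 = (c \<cdot>\<^sub>v u) $ 1" by simp
  then show "d = 1" using d unfolding u_def by (cases "d = 1") auto
qed

lemma abelian_3cocycleI:
  fixes \<Phi> :: "'g \<Rightarrow> 'g \<Rightarrow> 'g \<Rightarrow> 'k::field"
  assumes ac: "alg_closed TYPE('k)"
    and comm: "\<And>e f. e \<in> carrier K \<Longrightarrow> f \<in> carrier K \<Longrightarrow> e \<otimes>\<^bsub>K\<^esub> f = f \<otimes>\<^bsub>K\<^esub> e"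
    and sym: "\<And>g e f. g \<in> carrier K \<Longrightarrow> e \<in> carrier K \<Longrightarrow> f \<in> carrier K \<Longrightarrow>
      Phi_tilde \<Phi> g e f = Phi_tilde \<Phi> g f e"
  shows "abelian_3cocycle K \<Phi>"
  unfolding abelian_3cocycle_def
proof (intro allI impI)
  fix g d and \<rho> :: "'g \<Rightarrow> 'k mat"
  assume S: "simple_obj K \<Phi> g d \<rho>"
  then have "homog_obj K \<Phi> g d \<rho>" unfolding simple_obj_def by simp
  then have "\<rho> e * \<rho> f = \<rho> f * \<rho> e" if "e \<in> carrier K" "f \<in> carrier K" for e f
    using comm[OF that] sym[of g e f] that unfolding homog_obj_def by metis
  then show "d = 1" by (rule simple_obj_commuting_dim_one[OF ac S])
qed

lemma (in monoid) homog_obj_eigenvalue_mult: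
  assumes H: "homog_obj G \<Phi> g d \<rho>" and v: "v \<in> carrier_vec d" "v \<noteq> 0\<^sub>v d"
    and e: "e \<in> carrier G" and f: "f \<in> carrier G"
    and a: "\<rho> e *\<^sub>v v = a \<cdot>\<^sub>v v" and b: "\<rho> f *\<^sub>v v = b \<cdot>\<^sub>v v" and c: "\<rho> (e \<otimes> f) *\<^sub>v v = c \<cdot>\<^sub>v v"
  shows "b * a = Phi_tilde \<Phi> g e f * c"
proof (rule smult_vec_right_cancel[OF v])
  have car: "\<And>e. e \<in> carrier G \<Longrightarrow> \<rho> e \<in> carrier_mat d d"
    and mult: "\<rho> e * \<rho> f = Phi_tilde \<Phi> g e f \<cdot>\<^sub>m \<rho> (e \<otimes> f)"
    using H e f unfolding homog_obj_def by auto
  have "(b * a) \<cdot>\<^sub>v v = (\<rho> e * \<rho> f) *\<^sub>v v"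
    using car[OF e] car[OF f] v a b by (simp add: assoc_mult_mat_vec mult_mat_vec smult_smult_assoc)
  also have "\<dots> = (Phi_tilde \<Phi> g e f * c) \<cdot>\<^sub>v v"
    unfolding mult using smult_mat_mult_vec[OF car[OF m_closed[OF e f]] v(1)] c
    by (simp add: smult_smult_assoc)
  finally show "(b * a) \<cdot>\<^sub>v v = (Phi_tilde \<Phi> g e f * c) \<cdot>\<^sub>v v" .
qed

lemma (in comm_group) homog_obj_common_eigenvector_Phi_tilde_sym:
  assumes N: "normalized_3cocycle G \<Phi>" and H: "homog_obj G \<Phi> g d \<rho>"
    and v: "v \<in> carrier_vec d" "v \<noteq> 0\<^sub>v d"
    and eigen: "\<And>e. e \<in> carrier G \<Longrightarrow> \<exists>c. \<rho> e *\<^sub>v v = c \<cdot>\<^sub>v v"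
    and x: "x \<in> carrier G" and y: "y \<in> carrier G"
  shows "Phi_tilde \<Phi> g x y = Phi_tilde \<Phi> g y x"
proof -
  define \<chi> where "\<chi> e = (SOME c. \<rho> e *\<^sub>v v = c \<cdot>\<^sub>v v)" for e
  have \<chi>: "\<rho> e *\<^sub>v v = \<chi> e \<cdot>\<^sub>v v" if "e \<in> carrier G" for e
    unfolding \<chi>_def using someI_ex[OF eigen[OF that]] .
  have mult: "\<chi> f * \<chi> e = Phi_tilde \<Phi> g e f * \<chi> (e \<otimes> f)"
    if "e \<in> carrier G" "f \<in> carrier G" for e f
    using homog_obj_eigenvalue_mult[OF H v that \<chi> \<chi> \<chi>] that by simp
  have g: "g \<in> carrier G" and "\<rho> \<one> = 1\<^sub>m d" using H unfolding homog_obj_def by auto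
  then have "\<chi> \<one> = 1" using smult_vec_right_cancel[OF v] \<chi>[of \<one>] v by simp
  then have nonzero: "\<chi> e \<noteq> 0" if "e \<in> carrier G" for e
    using mult[of e "inv e"] Phi_tilde_nonzero[OF N g that inv_closed[OF that]] that by auto
  have "Phi_tilde \<Phi> g x y * \<chi> (x \<otimes> y) = Phi_tilde \<Phi> g y x * \<chi> (x \<otimes> y)"
    using mult[OF x y] mult[OF y x] m_comm[OF x y] by (metis mult.commute)
  then show ?thesis using nonzero[OF m_closed[OF x y]] by simp
qed

lemma (in comm_group) diagonal_type_Phi_skew_trivial:
  assumes N: "normalized_3cocycle G \<Phi>" and H: "homog_obj G \<Phi> g d \<rho>" and d: "d \<noteq> 0"
    and D: "diagonal_type G d \<rho>" and x: "x \<in> carrier G" and y: "y \<in> carrier G"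
  shows "Phi_skew \<Phi> g x y = 1"
proof -
  obtain vs where vs: "length vs = d" "set vs \<subseteq> carrier_vec d" "det (mat_of_cols d vs) \<noteq> 0"
    and eigen: "\<forall>v\<in>set vs. \<forall>e\<in>carrier G. \<exists>c. \<rho> e *\<^sub>v v = c \<cdot>\<^sub>v v"
    using D unfolding diagonal_type_def by blast
  have "vs ! 0 \<in> set vs" using vs(1) d by simp
  moreover have "vs ! 0 \<noteq> 0\<^sub>v d" using mat_of_cols_det_nonzero_col[OF vs] d by simp
  ultimately have "Phi_tilde \<Phi> g x y = Phi_tilde \<Phi> g y x"
    using homog_obj_common_eigenvector_Phi_tilde_sym[OF N H _ _ _ x y] vs(2) eigen by blast
  moreover have "g \<in> carrier G" using H unfolding homog_obj_def by simp
  ultimately show ?thesis unfolding Phi_skew_def using Phi_tilde_nonzero[OF N _ y x] by simp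
qed

lemma Phi_skew_eq_one_imp_sym:
  assumes "Phi_skew \<Phi> g x y = 1"
  shows "Phi_tilde \<Phi> g x y = Phi_tilde \<Phi> g y x"
  using assms unfolding Phi_skew_def by (cases "Phi_tilde \<Phi> g y x = 0") auto

theorem proposition4p7:
  fixes G :: "'g monoid" and \<Phi> :: "'g \<Rightarrow> 'g \<Rightarrow> 'g \<Rightarrow> 'k::field_char_0"
    and n :: nat and deg :: "nat \<Rightarrow> 'g" and dim :: "nat \<Rightarrow> nat" and \<rho> :: "nat \<Rightarrow> 'g \<Rightarrow> 'k mat"
    and H :: "'g set"
  assumes "alg_closed TYPE('k)"
    and "comm_group G" and "finite (carrier G)"
    and "normalized_3cocycle G \<Phi>"
    and "\<forall>i\<in>{1..n}. simple_obj G \<Phi> (deg i) (dim i) (\<rho> i)"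
    and "H = generate G (deg ` {1..n})"
    and "\<not> abelian_3cocycle (G\<lparr>carrier := H\<rparr>) \<Phi>"
  shows "n \<ge> 3 \<and> card {i\<in>{1..n}. \<not> diagonal_type G (dim i) (\<rho> i)} \<ge> 3"
proof (rule ccontr)
  interpret comm_group G by (rule assms(2))
  note N = assms(4) and simple = assms(5)
  note alt = Phi_skew_alternating_trimultiplicative[OF N]
  define Bad where "Bad = {i\<in>{1..n}. \<not> diagonal_type G (dim i) (\<rho> i)}"
  have "Bad \<subseteq> {1..n}" unfolding Bad_def by blast
  then have finite_Bad: "finite Bad" and "card Bad \<le> n"
    using finite_subset card_mono[of "{1..n}" Bad] by auto
  moreover assume "\<not> ?thesis"
  ultimately have bad_degrees: "card (deg ` Bad) \<le> 2"
    using card_image_le[of Bad deg] unfolding Bad_def by linarith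
  have S: "deg ` {1..n} \<subseteq> carrier G"
    using simple unfolding simple_obj_def homog_obj_def by blast
  have radical: "Phi_skew \<Phi> s y z = 1"
    if s: "s \<in> deg ` {1..n} - deg ` Bad" and yz: "y \<in> carrier G" "z \<in> carrier G" for s y z
  proof -
    obtain i where i: "i \<in> {1..n}" "i \<notin> Bad" "s = deg i" using s by blast
    then have "diagonal_type G (dim i) (\<rho> i)" unfolding Bad_def by blast
    moreover have "homog_obj G \<Phi> (deg i) (dim i) (\<rho> i)" "dim i \<noteq> 0"
      using simple i(1) unfolding simple_obj_def by auto
    ultimately show ?thesis using diagonal_type_Phi_skew_trivial[OF N] yz i(3) by blast
  qed
  have H: "H \<subseteq> carrier G" using generate_incl[OF S] assms(6) by simp
  have trivial: "Phi_skew \<Phi> x y z = 1" if "x \<in> H" "y \<in> H" "z \<in> H" for x y z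
    using alternating_trimultiplicative_trivial_on_generate[OF alt S
        alternating_trimultiplicative_trivial_on_generators[OF alt S finite_imageI[OF finite_Bad]
          bad_degrees radical]]
      that assms(6) by simp
  have "abelian_3cocycle (G\<lparr>carrier := H\<rparr>) \<Phi>"
    by (rule abelian_3cocycleI[OF assms(1)])
      (use H m_comm Phi_skew_eq_one_imp_sym[OF trivial] in \<open>auto simp: subset_iff\<close>)
  with assms(7) show False by contradiction
qed

end
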